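(* Let $f:[c_0,c_N]\to[c_0,c_N]$ satisfy properties P1–P6 with contraction pieces $X_1,\dots,X_N$ and slope $\lambda$, and suppose that every atom of generation $1$ of $f$ contains at most one point of $\Delta_f=\{c_1,\dots,c_{N-1}\}$. Then there exists a well-cutting orbit $\{\xi_r\}_{r\in\mathbb{N}}$ of $f$ such that, for any map $g$ constructed from it as below, every atom of generation $1$ of $g$ contains at most one point of $\Delta_g$. Construction of $g$: $\phi(x)=x+\sum_{n\geqslant1,\ \xi_n<x}\lambda^n$ on $[c_0,c_N]$; $G_r:=(\phi(\xi_r),\phi(\xi_r)+\lambda^r]$ for $r\geqslant1$; $\Delta_g:=\phi(\Delta_f\cup\{\xi_0\})$; $g:[\phi(c_0),\phi(c_N)]\to[\phi(c_0),\phi(c_N)]$ is any map with $g(y)=\phi\circ f\circ\phi^{-1}(y)$ for $y\in\phi([c_0,c_N])\setminus\Delta_g$ and $g(y)=\lambda(y-\phi(\xi_r))+\phi(\xi_{r+1})$ for $y\in G_r$, $r\geqslant1$; its contraction pieces are $Y_1=[d_0,d_1)$, $Y_j=(d_{j-1},d_j)$ ($1<j<N+1$), $Y_{N+1}=(d_N,d_{N+1}]$, where $d_0<\dots<d_{N+1}$ are the points of $\phi(\{c_0,\dots,c_N\}\cup\{\xi_0\})$.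
   Context: Setting: $N\geqslant2$, $c_0<\dots<c_N$, $X=[c_0,c_N]$, $X_1=[c_0,c_1)$, $X_i=(c_{i-1},c_i)$ ($1<i<N$), $X_N=(c_{N-1},c_N]$; $f_i$ the continuous extension of $f|_{X_i}$ to $\overline{X_i}$; $\widetilde X_f:=\bigcap_{n\geqslant0}f^{-n}(X\setminus\Delta_f)$. Atoms of a map $h$ with pieces $Z_i$ on an interval $Z$: $F_i(A):=\overline{h(A\cap Z_i)}$, $A_{i_1\dots i_n}:=F_{i_n}\circ\dots\circ F_{i_1}(Z)$ is an atom of generation $n$ if non-empty (so atoms of generation 1 are the sets $\overline{h(Z_i)}$). $\mathcal{A}_n$ is the set of atoms of generation $n$ of $f$, $\mathcal{A}_n(x):=\{A\in\mathcal{A}_n:\exists t\in\mathbb{N},f^{t+n}(x)\in A\}$; attractor $\Lambda_f:=\bigcap_{n\geqslant1}\bigcup_{A\in\mathcal{A}_n}A$. $\Delta_{lr}(x)$ is the set of $c_i\in\Delta_f$ such that for every $n\geqslant1$ there is $A\in\mathcal{A}_n(x)$ with $c_i\in A$, $f^{t+n}(x)\in A\cap X_i$ and $f^{t'+n}(x)\in A\cap X_{i+1}$ for some $t,t'\in\mathbb{N}$. P1: $f$ is discontinuous at every point of $\Delta_f$ and $f|_{X_i}$ is affine with slope $\lambda\in(0,1)$ for all $i$. P2 (separation): each $f_i$ injective and $f_i(\overline{X_i})\cap f_j(\overline{X_j})=\emptyset$ for $i\neq j$. P3: $\Lambda_f$ is a Cantor set. P4: $\bigcup_{i=1}^{N-1}\{f_i(c_i),f_{i+1}(c_i)\}\subset\widetilde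 X_f$. P5: for some $i$, $\{f^n(f_i(c_i))\}_n$ or $\{f^n(f_{i+1}(c_i))\}_n$ is dense in $\Lambda_f$. P6: $c_i\in\Delta_{lr}(x)$ for all $x\in\widetilde X_f$ and $i\in\{1,\dots,N-1\}$. A well-cutting orbit of $f$ is an orbit $\{\xi_r\}_{r\in\mathbb{N}}$, $\xi_r=f^r(\xi_0)$, with $\xi_0\in\Lambda_f\cap\widetilde X_f$, containing no point of: (1) the boundary points of the gaps of the Cantor set $\Lambda_f$; (2) the forward orbits of $c_0$ and $c_N$; (3) the forward orbits of $f_i(c_i)$ and $f_{i+1}(c_i)$, $i\in\{1,\dots,N-1\}$. *)

theory Defs
  imports "HOL-Analysis.Analysis"
begin

definition piece :: "(nat \<Rightarrow> real) \<Rightarrow> nat \<Rightarrow> nat \<Rightarrow> real set" where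
  "piece c M i = (if i = 1 then {c 0..<c 1}
                  else if i = M then {c (M - 1)<..c M}
                  else {c (i - 1)<..<c i})"

definition ext :: "(real \<Rightarrow> real) \<Rightarrow> real set \<Rightarrow> real \<Rightarrow> real" where
  "ext f A x = (if x \<in> A then f x else Lim (at x within A) f)"

definition fpiece :: "nat \<Rightarrow> (nat \<Rightarrow> real) \<Rightarrow> (real \<Rightarrow> real) \<Rightarrow> nat \<Rightarrow> real \<Rightarrow> real" where
  "fpiece N c f i = ext f (piece c N i)"

definition Delta :: "nat \<Rightarrow> (nat \<Rightarrow> real) \<Rightarrow> real set" where
  "Delta N c = c ` {1..N - 1}"

text \<open>Atoms of generation n of a map h with pieces P 1, ..., P M on the interval Z.
  The word [i1,...,in] gives F_in o ... o F_i1 (Z).\<close>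
definition atoms :: "(real \<Rightarrow> real) \<Rightarrow> real set \<Rightarrow> (nat \<Rightarrow> real set) \<Rightarrow> nat \<Rightarrow> nat \<Rightarrow> real set set" where
  "atoms h Z P M n = {A. \<exists>w. length w = n \<and> set w \<subseteq> {1..M} \<and>
      A = fold (\<lambda>i B. closure (h ` (B \<inter> P i))) w Z \<and> A \<noteq> {}}"

definition atomsf :: "nat \<Rightarrow> (nat \<Rightarrow> real) \<Rightarrow> (real \<Rightarrow> real) \<Rightarrow> nat \<Rightarrow> real set set" where
  "atomsf N c f n = atoms f {c 0..c N} (piece c N) N n"

definition attractor :: "nat \<Rightarrow> (nat \<Rightarrow> real) \<Rightarrow> (real \<Rightarrow> real) \<Rightarrow> real set" where
  "attractor N c f = (\<Inter>n\<in>{1..}. \<Union>(atomsf N c f n))"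

definition Xtilde :: "nat \<Rightarrow> (nat \<Rightarrow> real) \<Rightarrow> (real \<Rightarrow> real) \<Rightarrow> real set" where
  "Xtilde N c f = (\<Inter>n. (f ^^ n) -` ({c 0..c N} - Delta N c))"

definition atoms_of_pt :: "nat \<Rightarrow> (nat \<Rightarrow> real) \<Rightarrow> (real \<Rightarrow> real) \<Rightarrow> nat \<Rightarrow> real \<Rightarrow> real set set" where
  "atoms_of_pt N c f n x = {A \<in> atomsf N c f n. \<exists>t. (f ^^ (t + n)) x \<in> A}"

definition Delta_lr :: "nat \<Rightarrow> (nat \<Rightarrow> real) \<Rightarrow> (real \<Rightarrow> real) \<Rightarrow> real \<Rightarrow> real set" where
  "Delta_lr N c f x = {c i | i. i \<in> {1..N - 1} \<and>
     (\<forall>n\<ge>1. \<exists>A\<in>atoms_of_pt N c f n x. c i \<in> A \<and>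
        (\<exists>t. (f ^^ (t + n)) x \<in> A \<inter> piece c N i) \<and>
        (\<exists>t'. (f ^^ (t' + n)) x \<in> A \<inter> piece c N (i + 1)))}"

definition cantor_set :: "real set \<Rightarrow> bool" where
  "cantor_set S \<longleftrightarrow> S \<noteq> {} \<and> compact S \<and> (\<forall>x\<in>S. x islimpt S) \<and>
     (\<forall>x\<in>S. connected_component_set S x = {x})"

definition gap_endpoints :: "real set \<Rightarrow> real set" where
  "gap_endpoints S = {x. \<exists>G. G \<in> components (- S) \<and> bounded G \<and> x \<in> frontier G}"

definition orbit :: "(real \<Rightarrow> real) \<Rightarrow> real \<Rightarrow> real set" where
  "orbit f x = range (\<lambda>n. (f ^^ n) x)"

definition P1 :: "nat \<Rightarrow> (nat \<Rightarrow> real) \<Rightarrow> (real \<Rightarrow> real) \<Rightarrow> real \<Rightarrow> bool" where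
  "P1 N c f lam \<longleftrightarrow> 0 < lam \<and> lam < 1 \<and>
     (\<forall>x\<in>Delta N c. \<not> continuous (at x within {c 0..c N}) f) \<and>
     (\<forall>i\<in>{1..N}. \<exists>b. \<forall>x\<in>piece c N i. f x = lam * x + b)"

definition P2 :: "nat \<Rightarrow> (nat \<Rightarrow> real) \<Rightarrow> (real \<Rightarrow> real) \<Rightarrow> bool" where
  "P2 N c f \<longleftrightarrow> (\<forall>i\<in>{1..N}. inj_on (fpiece N c f i) (closure (piece c N i))) \<and>
     (\<forall>i\<in>{1..N}. \<forall>j\<in>{1..N}. i \<noteq> j \<longrightarrow>
        fpiece N c f i ` closure (piece c N i) \<inter> fpiece N c f j ` closure (piece c N j) = {})"

definition P3 :: "nat \<Rightarrow> (nat \<Rightarrow> real) \<Rightarrow> (real \<Rightarrow> real) \<Rightarrow> bool" where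
  "P3 N c f \<longleftrightarrow> cantor_set (attractor N c f)"

definition P4 :: "nat \<Rightarrow> (nat \<Rightarrow> real) \<Rightarrow> (real \<Rightarrow> real) \<Rightarrow> bool" where
  "P4 N c f \<longleftrightarrow> (\<forall>i\<in>{1..N - 1}.
     fpiece N c f i (c i) \<in> Xtilde N c f \<and> fpiece N c f (i + 1) (c i) \<in> Xtilde N c f)"

definition P5 :: "nat \<Rightarrow> (nat \<Rightarrow> real) \<Rightarrow> (real \<Rightarrow> real) \<Rightarrow> bool" where
  "P5 N c f \<longleftrightarrow> (\<exists>i\<in>{1..N - 1}.
     attractor N c f \<subseteq> closure (orbit f (fpiece N c f i (c i))) \<or>
     attractor N c f \<subseteq> closure (orbit f (fpiece N c f (i + 1) (c i))))"

definition P6 :: "nat \<Rightarrow> (nat \<Rightarrow> real) \<Rightarrow> (real \<Rightarrow> real) \<Rightarrow> bool" where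
  "P6 N c f \<longleftrightarrow> (\<forall>x\<in>Xtilde N c f. \<forall>i\<in>{1..N - 1}. c i \<in> Delta_lr N c f x)"

definition well_cutting :: "nat \<Rightarrow> (nat \<Rightarrow> real) \<Rightarrow> (real \<Rightarrow> real) \<Rightarrow> real \<Rightarrow> bool" where
  "well_cutting N c f xi0 \<longleftrightarrow> xi0 \<in> attractor N c f \<inter> Xtilde N c f \<and>
     orbit f xi0 \<inter> gap_endpoints (attractor N c f) = {} \<and>
     orbit f xi0 \<inter> orbit f (c 0) = {} \<and>
     orbit f xi0 \<inter> orbit f (c N) = {} \<and>
     (\<forall>i\<in>{1..N - 1}. orbit f xi0 \<inter> orbit f (fpiece N c f i (c i)) = {} \<and>
                      orbit f xi0 \<inter> orbit f (fpiece N c f (i + 1) (c i)) = {})"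

definition phi :: "(real \<Rightarrow> real) \<Rightarrow> real \<Rightarrow> real \<Rightarrow> real \<Rightarrow> real" where
  "phi f lam xi0 x = x + (\<Sum>n. if 1 \<le> n \<and> (f ^^ n) xi0 < x then lam ^ n else 0)"

definition constructed_map :: "nat \<Rightarrow> (nat \<Rightarrow> real) \<Rightarrow> (real \<Rightarrow> real) \<Rightarrow> real \<Rightarrow> real \<Rightarrow> (real \<Rightarrow> real) \<Rightarrow> bool" where
  "constructed_map N c f lam xi0 g \<longleftrightarrow>
     (let \<phi> = phi f lam xi0; \<xi> = (\<lambda>r. (f ^^ r) xi0); Dg = \<phi> ` (Delta N c \<union> {xi0}) in
       g ` {\<phi> (c 0)..\<phi> (c N)} \<subseteq> {\<phi> (c 0)..\<phi> (c N)} \<and>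
       (\<forall>x\<in>{c 0..c N}. \<phi> x \<notin> Dg \<longrightarrow> g (\<phi> x) = \<phi> (f x)) \<and>
       (\<forall>r\<ge>1. \<forall>y\<in>{\<phi> (\<xi> r)<..\<phi> (\<xi> r) + lam ^ r}. g y = lam * (y - \<phi> (\<xi> r)) + \<phi> (\<xi> (r + 1))))"

definition dpts :: "nat \<Rightarrow> (nat \<Rightarrow> real) \<Rightarrow> (real \<Rightarrow> real) \<Rightarrow> real \<Rightarrow> real \<Rightarrow> nat \<Rightarrow> real" where
  "dpts N c f lam xi0 j = sorted_list_of_set (phi f lam xi0 ` (c ` {0..N} \<union> {xi0})) ! j"

definition Delta_g :: "nat \<Rightarrow> (nat \<Rightarrow> real) \<Rightarrow> (real \<Rightarrow> real) \<Rightarrow> real \<Rightarrow> real \<Rightarrow> real set" where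
  "Delta_g N c f lam xi0 = phi f lam xi0 ` (Delta N c \<union> {xi0})"

definition atoms_g :: "nat \<Rightarrow> (nat \<Rightarrow> real) \<Rightarrow> (real \<Rightarrow> real) \<Rightarrow> real \<Rightarrow> real \<Rightarrow> (real \<Rightarrow> real) \<Rightarrow> nat \<Rightarrow> real set set" where
  "atoms_g N c f lam xi0 g n =
     atoms g {phi f lam xi0 (c 0)..phi f lam xi0 (c N)} (piece (dpts N c f lam xi0) (N + 1)) (N + 1) n"

end

theory Submission
  imports Defs
begin

text \<open>
  The \<open>N\<close> atoms of generation 1 are pairwise disjoint (P2) while \<open>\<Delta>\<^sub>f\<close> has only \<open>N - 1\<close>
  points, so some atom \<open>F\<^sub>m(X)\<close> contains no discontinuity. Using P4 and P6, atoms of every generation meet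
  \<open>F\<^sub>m(X)\<close>, so by compactness \<open>\<Lambda>\<^sub>f \<inter> F\<^sub>m(X)\<close> is nonempty; as a relatively open part of the
  Cantor set \<open>\<Lambda>\<^sub>f\<close> (P3) it is perfect, hence uncountable. The points excluded from a
  well-cutting orbit, together with the eventually periodic points, form a countable set,
  because every iterate of \<open>f\<close> is affine with slope \<open>\<lambda>\<^sup>n\<close> and finitely many offsets. So we can
  pick \<open>\<xi>\<^sub>0\<close> in \<open>\<Lambda>\<^sub>f \<inter> F\<^sub>m(X)\<close> with a well-cutting, injective orbit.

  For such \<open>\<xi>\<^sub>0\<close>, \<open>\<phi>\<close> is strictly increasing and \<open>[\<phi>(c\<^sub>0), \<phi>(c\<^sub>N)]\<close> is covered by \<open>\<phi>([c\<^sub>0,c\<^sub>N])\<close> and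
  the gaps \<open>G\<^sub>r\<close>. A piece \<open>Y\<^sub>j\<close> of \<open>g\<close> contains no point \<open>\<phi>(c\<^sub>i)\<close>, so it lies over a single piece
  \<open>X\<^sub>i\<close> of \<open>f\<close>, and \<open>g(Y\<^sub>j)\<close> lies in the \<open>\<phi>\<close>-hull of \<open>F\<^sub>i(X)\<close>. Hence the points of \<open>\<Delta>\<^sub>g\<close> in an
  atom of generation 1 of \<open>g\<close> are images of points of \<open>\<Delta>\<^sub>f \<union> {\<xi>\<^sub>0}\<close> in one atom \<open>F\<^sub>i(X)\<close>, of
  which there is at most one: \<open>\<xi>\<^sub>0\<close> only lies in \<open>F\<^sub>m(X)\<close>, which misses \<open>\<Delta>\<^sub>f\<close>.
\<close>

section \<open>The map \<open>\<phi>\<close> of an orbit\<close>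

locale contracted_orbit =
  fixes f :: "real \<Rightarrow> real" and lam xi0 :: real
  assumes lam_pos: "0 < lam" and lam_less_1: "lam < 1"
begin

definition xi :: "nat \<Rightarrow> real" where "xi n = (f ^^ n) xi0"

definition weight :: "(nat \<Rightarrow> bool) \<Rightarrow> real" where
  "weight P = (\<Sum>n. if P n then lam ^ n else 0)"

lemma summable_weight: "summable (\<lambda>n. if P n then lam ^ n else (0::real))"
  by (rule summable_comparison_test[where g="\<lambda>n. lam ^ n"])
    (use lam_pos lam_less_1 in \<open>auto simp: summable_geometric\<close>)

lemma weight_mono: "(\<And>n. P n \<Longrightarrow> Q n) \<Longrightarrow> weight P \<le> weight Q"
  unfolding weight_def using lam_pos by (intro suminf_le summable_weight) auto

lemma weight_disj: "(\<And>n. \<not> (P n \<and> Q n)) \<Longrightarrow> weight (\<lambda>n. P n \<or> Q n) = weight P + weight Q"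
  unfolding weight_def
  by (subst suminf_add[OF summable_weight summable_weight]) (rule arg_cong[where f=suminf], auto)

lemma weight_single: "weight (\<lambda>n. n = r) = lam ^ r"
  using sums_single[of r "\<lambda>n. lam ^ n"] unfolding weight_def by (simp add: sums_iff)

lemma weight_tail_small:
  assumes "0 < e"
  obtains K where "\<And>P. (\<And>n. P n \<Longrightarrow> K \<le> n) \<Longrightarrow> weight P < e"
proof -
  obtain K where K: "lam ^ K < e * (1 - lam)"
    using real_arch_pow_inv[of "e * (1 - lam)" lam] lam_less_1 assms by auto
  have "weight P < e" if P: "\<And>n. P n \<Longrightarrow> K \<le> n" for P
  proof -
    have geom: "summable (\<lambda>i. lam ^ (i + K))"
      using summable_ignore_initial_segment[OF summable_geometric[of lam], of K] lam_pos lam_less_1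
      by simp
    have "weight P = (\<Sum>i. if P (i + K) then lam ^ (i + K) else 0)
                     + (\<Sum>i<K. if P i then lam ^ i else 0)"
      unfolding weight_def by (rule suminf_split_initial_segment[OF summable_weight])
    also have "(\<Sum>i<K. if P i then lam ^ i else 0) = 0"
      using P by (intro sum.neutral) fastforce
    also have "(\<Sum>i. if P (i + K) then lam ^ (i + K) else 0) \<le> (\<Sum>i. lam ^ (i + K))"
      by (rule suminf_le)
        (use lam_pos summable_ignore_initial_segment[OF summable_weight[of P], of K] geom in auto)
    also have "(\<Sum>i. lam ^ (i + K)) = lam ^ K / (1 - lam)"
      using suminf_mult[OF summable_geometric[of lam], of "lam ^ K"] suminf_geometric[of lam]
        lam_pos lam_less_1
      by (simp add: power_add mult.commute)
    also have "\<dots> < e" using K lam_less_1 by (simp add: divide_less_eq)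
    finally show ?thesis by simp
  qed
  then show ?thesis by (rule that)
qed

abbreviation \<phi> where "\<phi> \<equiv> phi f lam xi0"

text \<open>The right limit \<open>\<phi>(x+)\<close>.\<close>
definition phi_right :: "real \<Rightarrow> real" where
  "phi_right x = x + weight (\<lambda>n. 1 \<le> n \<and> xi n \<le> x)"

lemma phi_eq_weight: "\<phi> x = x + weight (\<lambda>n. 1 \<le> n \<and> xi n < x)"
  unfolding phi_def weight_def xi_def by simp

lemma phi_right_less_phi: "x < x' \<Longrightarrow> phi_right x < \<phi> x'"
  using weight_mono[of "\<lambda>n. 1 \<le> n \<and> xi n \<le> x" "\<lambda>n. 1 \<le> n \<and> xi n < x'"]
  unfolding phi_eq_weight phi_right_def by fastforce

lemma phi_le_phi_right: "\<phi> x \<le> phi_right x"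
  using weight_mono[of "\<lambda>n. 1 \<le> n \<and> xi n < x" "\<lambda>n. 1 \<le> n \<and> xi n \<le> x"]
  unfolding phi_eq_weight phi_right_def by fastforce

lemma phi_strict_mono: "x < x' \<Longrightarrow> \<phi> x < \<phi> x'"
  using phi_right_less_phi phi_le_phi_right by (meson le_less_trans)

lemma phi_mono: "x \<le> x' \<Longrightarrow> \<phi> x \<le> \<phi> x'"
  using phi_strict_mono by (cases "x = x'") (auto simp: order_le_less)

lemma phi_inj: "\<phi> x = \<phi> y \<Longrightarrow> x = y"
  using phi_strict_mono by (metis less_irrefl linorder_neqE)

lemma phi_right_mono: "x \<le> x' \<Longrightarrow> phi_right x \<le> phi_right x'"
  using weight_mono[of "\<lambda>n. 1 \<le> n \<and> xi n \<le> x" "\<lambda>n. 1 \<le> n \<and> xi n \<le> x'"]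
  unfolding phi_right_def by fastforce

lemma phi_gap_le_phi_right: "1 \<le> r \<Longrightarrow> \<phi> (xi r) + lam ^ r \<le> phi_right (xi r)"
  using weight_disj[of "\<lambda>n. 1 \<le> n \<and> xi n < xi r" "\<lambda>n. n = r"]
    weight_mono[of "\<lambda>n. (1 \<le> n \<and> xi n < xi r) \<or> n = r" "\<lambda>n. 1 \<le> n \<and> xi n \<le> xi r"]
  unfolding phi_eq_weight phi_right_def weight_single by fastforce

lemma phi_right_eq_phi: "(\<And>n. 1 \<le> n \<Longrightarrow> xi n \<noteq> x) \<Longrightarrow> phi_right x = \<phi> x"
  unfolding phi_eq_weight phi_right_def
  by (rule arg_cong[where f="\<lambda>P. x + weight P"]) (auto simp: fun_eq_iff order_le_less)

lemma phi_diff: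
  assumes "t < x"
  shows "\<phi> x - \<phi> t = (x - t) + weight (\<lambda>n. 1 \<le> n \<and> t \<le> xi n \<and> xi n < x)"
proof -
  have "(\<lambda>n. 1 \<le> n \<and> xi n < x) = (\<lambda>n. (1 \<le> n \<and> xi n < t) \<or> (1 \<le> n \<and> t \<le> xi n \<and> xi n < x))"
    using assms by (auto simp: fun_eq_iff)
  then show ?thesis
    using weight_disj[of "\<lambda>n. 1 \<le> n \<and> xi n < t" "\<lambda>n. 1 \<le> n \<and> t \<le> xi n \<and> xi n < x"]
    unfolding phi_eq_weight by auto
qed

lemma phi_right_diff:
  assumes "x < t"
  shows "\<phi> t - phi_right x = (t - x) + weight (\<lambda>n. 1 \<le> n \<and> x < xi n \<and> xi n < t)"
proof -
  have "(\<lambda>n. 1 \<le> n \<and> xi n < t) = (\<lambda>n. (1 \<le> n \<and> xi n \<le> x) \<or> (1 \<le> n \<and> x < xi n \<and> xi n < t))"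
    using assms by (auto simp: fun_eq_iff)
  then show ?thesis
    using weight_disj[of "\<lambda>n. 1 \<le> n \<and> xi n \<le> x" "\<lambda>n. 1 \<le> n \<and> x < xi n \<and> xi n < t"]
    unfolding phi_eq_weight phi_right_def by auto
qed

lemma weight_near_small:
  assumes "0 < e"
  obtains d where "d > 0" "\<And>P. (\<And>n. P n \<Longrightarrow> xi n \<noteq> x \<and> \<bar>x - xi n\<bar> < d) \<Longrightarrow> weight P < e"
proof -
  obtain K where K: "\<And>P. (\<And>n. P n \<Longrightarrow> K \<le> n) \<Longrightarrow> weight P < e"
    using weight_tail_small assms by blast
  obtain d where d: "d > 0" "\<forall>y\<in>xi ` {..<K}. y \<noteq> x \<longrightarrow> d \<le> dist x y"
    using finite_set_avoid[of "xi ` {..<K}" x] by blast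
  have "weight P < e" if P: "\<And>n. P n \<Longrightarrow> xi n \<noteq> x \<and> \<bar>x - xi n\<bar> < d" for P
  proof (rule K)
    fix n assume "P n"
    show "K \<le> n"
    proof (rule ccontr)
      assume "\<not> K \<le> n"
      then have "d \<le> dist x (xi n)" using d(2) P[OF \<open>P n\<close>] by simp
      then show False using P[OF \<open>P n\<close>] by (simp add: dist_real_def)
    qed
  qed
  then show ?thesis using that d(1) by blast
qed

lemma phi_left_limit:
  assumes "0 < e"
  shows "\<exists>d>0. \<forall>t. x - d < t \<longrightarrow> t < x \<longrightarrow> \<phi> x - \<phi> t < e"
proof -
  obtain d where d: "d > 0" "\<And>P. (\<And>n. P n \<Longrightarrow> xi n \<noteq> x \<and> \<bar>x - xi n\<bar> < d) \<Longrightarrow> weight P < e/2"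
    using weight_near_small[of "e/2" x] assms by auto
  have "\<phi> x - \<phi> t < e" if t: "x - min d (e/2) < t" "t < x" for t
  proof -
    have "weight (\<lambda>n. 1 \<le> n \<and> t \<le> xi n \<and> xi n < x) < e/2" using t by (intro d(2)) auto
    then show ?thesis using phi_diff[OF t(2)] t by simp
  qed
  then show ?thesis using d(1) assms by (intro exI[of _ "min d (e/2)"]) auto
qed

lemma phi_right_limit:
  assumes "0 < e"
  shows "\<exists>d>0. \<forall>t. x < t \<longrightarrow> t < x + d \<longrightarrow> \<phi> t - phi_right x < e"
proof -
  obtain d where d: "d > 0" "\<And>P. (\<And>n. P n \<Longrightarrow> xi n \<noteq> x \<and> \<bar>x - xi n\<bar> < d) \<Longrightarrow> weight P < e/2"
    using weight_near_small[of "e/2" x] assms by auto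
  have "\<phi> t - phi_right x < e" if t: "x < t" "t < x + min d (e/2)" for t
  proof -
    have "weight (\<lambda>n. 1 \<le> n \<and> x < xi n \<and> xi n < t) < e/2" using t by (intro d(2)) auto
    then show ?thesis using phi_right_diff[OF t(1)] t by simp
  qed
  then show ?thesis using d(1) assms by (intro exI[of _ "min d (e/2)"]) auto
qed

text \<open>Intermediate values of the monotone jump function \<open>\<phi>\<close>: a supremum argument, with the
  two one-sided limits above ruling out \<open>y < \<phi> x\<close> and \<open>phi_right x < y\<close>.\<close>
lemma phi_intermediate:
  assumes ab: "a \<le> b" and y: "\<phi> a \<le> y" "y \<le> \<phi> b"
  obtains x where "x \<in> {a..b}" "\<phi> x \<le> y" "y \<le> phi_right x"
proof -
  define S where "S = {t\<in>{a..b}. \<phi> t \<le> y}"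
  define x where "x = Sup S"
  have aS: "a \<in> S" using ab y unfolding S_def by auto
  have bdd: "bdd_above S" unfolding S_def by (auto intro: bdd_aboveI[of _ b])
  have ax: "a \<le> x" unfolding x_def using aS bdd by (rule cSup_upper)
  have xb: "x \<le> b" unfolding x_def using aS by (intro cSup_least) (auto simp: S_def)
  have below: "\<phi> x \<le> y"
  proof (rule ccontr)
    assume "\<not> \<phi> x \<le> y"
    then obtain d where d: "d > 0" "\<forall>t. x - d < t \<longrightarrow> t < x \<longrightarrow> \<phi> x - \<phi> t < \<phi> x - y"
      using phi_left_limit[of "\<phi> x - y" x] by auto
    obtain t where t: "t \<in> S" "x - d < t"
      using less_cSupE[of "x - d" S] aS d(1) unfolding x_def by auto
    have "t \<le> x" unfolding x_def using t(1) bdd by (rule cSup_upper)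
    moreover have "t \<noteq> x" using t(1) \<open>\<not> \<phi> x \<le> y\<close> unfolding S_def by auto
    ultimately have "\<phi> x - \<phi> t < \<phi> x - y" using d t by simp
    then show False using t(1) unfolding S_def by simp
  qed
  have above: "y \<le> phi_right x"
  proof (rule ccontr)
    assume not_above: "\<not> y \<le> phi_right x"
    have "x \<noteq> b" using not_above y phi_le_phi_right[of b] by auto
    then have "x < b" using xb by simp
    obtain d where d: "d > 0" "\<forall>t. x < t \<longrightarrow> t < x + d \<longrightarrow> \<phi> t - phi_right x < y - phi_right x"
      using phi_right_limit[of "y - phi_right x" x] not_above by auto
    define t where "t = min (x + d/2) b"
    have t: "x < t" "t < x + d" "t \<le> b" using d \<open>x < b\<close> unfolding t_def by auto
    then have "\<phi> t < y" using d(2) by fastforce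
    then have "t \<in> S" using t ax unfolding S_def by simp
    then have "t \<le> x" unfolding x_def using bdd by (rule cSup_upper)
    then show False using t by simp
  qed
  show ?thesis using that below above ax xb by auto
qed

end

locale injective_contracted_orbit = contracted_orbit +
  assumes orbit_inj: "\<And>m n. (f ^^ m) xi0 = (f ^^ n) xi0 \<Longrightarrow> m = n"
begin

lemma phi_right_eq_gap: "1 \<le> r \<Longrightarrow> phi_right (xi r) = \<phi> (xi r) + lam ^ r"
proof -
  assume r: "1 \<le> r"
  have "(\<lambda>n. 1 \<le> n \<and> xi n \<le> xi r) = (\<lambda>n. (1 \<le> n \<and> xi n < xi r) \<or> n = r)"
    using r orbit_inj unfolding xi_def by (auto simp: fun_eq_iff order_le_less)
  then show ?thesis
    using weight_disj[of "\<lambda>n. 1 \<le> n \<and> xi n < xi r" "\<lambda>n. n = r"]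
    unfolding phi_eq_weight phi_right_def weight_single by auto
qed

lemma phi_image_or_gap:
  assumes "a \<le> b" and "\<phi> a \<le> y" "y \<le> \<phi> b"
  shows "(\<exists>x\<in>{a..b}. y = \<phi> x) \<or> (\<exists>r\<ge>1. \<phi> (xi r) < y \<and> y \<le> \<phi> (xi r) + lam ^ r)"
proof -
  obtain x where x: "x \<in> {a..b}" "\<phi> x \<le> y" "y \<le> phi_right x"
    using phi_intermediate assms by blast
  show ?thesis
  proof (cases "y = \<phi> x")
    case False
    then have "phi_right x \<noteq> \<phi> x" using x by auto
    then obtain r where "r \<ge> 1" "xi r = x"
      using phi_right_eq_phi by blast
    then show ?thesis using phi_right_eq_gap x False by auto
  qed (use x in blast)
qed

end

section \<open>Piecewise affine contractions\<close>

lemma mem_piece_iff: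
  assumes "2 \<le> M" "i \<in> {1..M}"
  shows "x \<in> piece d M i \<longleftrightarrow>
    d (i-1) \<le> x \<and> x \<le> d i \<and> (i \<noteq> 1 \<longrightarrow> d (i-1) < x) \<and> (i \<noteq> M \<longrightarrow> x < d i)"
  using assms by (auto simp: piece_def)

locale piecewise_contraction =
  fixes N :: nat and c :: "nat \<Rightarrow> real" and f :: "real \<Rightarrow> real" and lam :: real
  assumes two_le_N: "2 \<le> N" and c_strict_mono: "strict_mono_on {0..N} c"
    and f_into: "f ` {c 0..c N} \<subseteq> {c 0..c N}"
    and affine: "P1 N c f lam" and separated: "P2 N c f"
begin

abbreviation Z where "Z \<equiv> {c 0..c N}"
abbreviation X where "X \<equiv> piece c N"
abbreviation \<Delta> where "\<Delta> \<equiv> Delta N c"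

lemma lam_pos: "0 < lam" and lam_less_1: "lam < 1"
  using affine by (auto simp: P1_def)

lemma c_less: "i < j \<Longrightarrow> j \<le> N \<Longrightarrow> c i < c j"
  using c_strict_mono by (auto simp: strict_mono_on_def)

lemma c_le: "i \<le> j \<Longrightarrow> j \<le> N \<Longrightarrow> c i \<le> c j"
  using c_less by (cases "i = j") (auto simp: order_le_less)

lemma c_inj: "i \<le> N \<Longrightarrow> j \<le> N \<Longrightarrow> c i = c j \<Longrightarrow> i = j"
  by (metis c_less less_irrefl nat_neq_iff)

lemma mem_X_iff:
  "i \<in> {1..N} \<Longrightarrow> x \<in> X i \<longleftrightarrow>
    c (i-1) \<le> x \<and> x \<le> c i \<and> (i \<noteq> 1 \<longrightarrow> c (i-1) < x) \<and> (i \<noteq> N \<longrightarrow> x < c i)"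
  using mem_piece_iff[OF two_le_N] by blast

lemma X_subset_Z: "i \<in> {1..N} \<Longrightarrow> X i \<subseteq> Z"
  using mem_X_iff c_le[of 0 "i-1"] c_le[of i N] by fastforce

lemma Delta_bounds: "p \<in> \<Delta> \<Longrightarrow> c 0 < p \<and> p < c N"
  unfolding Delta_def using c_less by auto

lemma finite_Delta: "finite \<Delta>"
  unfolding Delta_def by simp

lemma piece_containing:
  assumes "x \<in> Z" "x \<notin> \<Delta>"
  obtains i where "i \<in> {1..N}" "x \<in> X i"
proof (cases "x = c N")
  case True
  have "c (N-1) < c N" using two_le_N by (intro c_less) auto
  then show ?thesis using that[of N] True two_le_N mem_X_iff[of N x] by auto
next
  case False
  then have "x < c N" using assms by auto
  define i where "i = (LEAST i. x < c i)"
  have ci: "x < c i" unfolding i_def by (rule LeastI[of _ N]) (rule \<open>x < c N\<close>)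
  have "i \<le> N" unfolding i_def by (rule Least_le) (rule \<open>x < c N\<close>)
  have "i \<noteq> 0" using ci assms by (cases i) auto
  have lo: "c (i-1) \<le> x"
    using Least_le[of "\<lambda>i. x < c i" "i-1"] \<open>i \<noteq> 0\<close> unfolding i_def[symmetric] by force
  have "c (i-1) \<noteq> x" if "i \<noteq> 1"
    using that assms \<open>i \<noteq> 0\<close> \<open>i \<le> N\<close> unfolding Delta_def by force
  then have "x \<in> X i" using mem_X_iff[of i x] \<open>i \<noteq> 0\<close> \<open>i \<le> N\<close> lo ci by auto
  then show ?thesis using that[of i] \<open>i \<noteq> 0\<close> \<open>i \<le> N\<close> by simp
qed

lemma piece_order:
  assumes i: "i \<in> {1..N}" "i' \<in> {1..N}" "i < i'" and x: "x \<in> X i" "x' \<in> X i'"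
  shows "x < c i" "c i < x'" "c i \<in> \<Delta>"
proof -
  show "x < c i" using mem_X_iff[OF i(1)] x i by auto
  have "c i \<le> c (i'-1)" using i by (intro c_le) auto
  then show "c i < x'" using mem_X_iff[OF i(2)] x i by auto
  show "c i \<in> \<Delta>" unfolding Delta_def using i by auto
qed

definition offset :: "nat \<Rightarrow> real" where
  "offset i = (SOME b. \<forall>x\<in>X i. f x = lam * x + b)"

lemma f_on_piece: "i \<in> {1..N} \<Longrightarrow> x \<in> X i \<Longrightarrow> f x = lam * x + offset i"
proof -
  assume i: "i \<in> {1..N}" and x: "x \<in> X i"
  have "\<exists>b. \<forall>x\<in>X i. f x = lam * x + b" using affine i unfolding P1_def by blast
  then have "\<forall>x\<in>X i. f x = lam * x + offset i" unfolding offset_def by (rule someI_ex)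
  then show ?thesis using x by blast
qed

definition atom1 :: "nat \<Rightarrow> real set" where "atom1 i = closure (f ` X i)"
definition atom_lo :: "nat \<Rightarrow> real" where "atom_lo i = lam * c (i-1) + offset i"
definition atom_hi :: "nat \<Rightarrow> real" where "atom_hi i = lam * c i + offset i"

lemma atom_lo_less_hi: "i \<in> {1..N} \<Longrightarrow> atom_lo i < atom_hi i"
  unfolding atom_lo_def atom_hi_def using c_less[of "i-1" i] lam_pos by simp

lemma divide_lam_iff:
  "a \<le> y / lam \<longleftrightarrow> lam * a \<le> y" "y / lam \<le> a \<longleftrightarrow> y \<le> lam * a"
  "a < y / lam \<longleftrightarrow> lam * a < y" "y / lam < a \<longleftrightarrow> y < lam * a"
  using lam_pos by (simp_all add: pos_le_divide_eq pos_divide_le_eq pos_less_divide_eq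
      pos_divide_less_eq mult.commute)

lemma closure_X: "i \<in> {1..N} \<Longrightarrow> closure (X i) = {c (i-1)..c i}"
proof -
  assume i: "i \<in> {1..N}"
  have inner: "{c (i-1)<..<c i} \<subseteq> X i"
  proof
    fix x assume "x \<in> {c (i-1)<..<c i}" then show "x \<in> X i" using mem_X_iff[OF i] by simp
  qed
  have outer: "X i \<subseteq> {c (i-1)..c i}"
  proof
    fix x assume "x \<in> X i" then show "x \<in> {c (i-1)..c i}" using mem_X_iff[OF i] by simp
  qed
  have "closure {c (i-1)<..<c i} = {c (i-1)..c i}"
    using i c_less[of "i-1" i] by (intro closure_greaterThanLessThan) auto
  then have "{c (i-1)..c i} \<subseteq> closure (X i)" using closure_mono[OF inner] by simp
  moreover have "closure (X i) \<subseteq> {c (i-1)..c i}" using closure_mono[OF outer] by simp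
  ultimately show ?thesis by (rule subset_antisym[rotated])
qed

lemma atom1_eq: "i \<in> {1..N} \<Longrightarrow> atom1 i = {atom_lo i..atom_hi i}"
proof -
  assume i: "i \<in> {1..N}"
  have "f ` X i \<subseteq> {atom_lo i..atom_hi i}"
  proof
    fix y assume "y \<in> f ` X i"
    then obtain x where x: "x \<in> X i" "y = f x" by blast
    then have "c (i-1) \<le> x" "x \<le> c i" using mem_X_iff[OF i] by simp_all
    then show "y \<in> {atom_lo i..atom_hi i}"
      using f_on_piece[OF i x(1)] x(2) lam_pos unfolding atom_lo_def atom_hi_def by simp
  qed
  then have "atom1 i \<subseteq> {atom_lo i..atom_hi i}"
    unfolding atom1_def by (rule closure_minimal) simp
  moreover have "{atom_lo i<..<atom_hi i} \<subseteq> f ` X i"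
  proof
    fix y assume y: "y \<in> {atom_lo i<..<atom_hi i}"
    define x where "x = (y - offset i) / lam"
    have "lam * c (i-1) < y - offset i" "y - offset i < lam * c i"
      using y unfolding atom_lo_def atom_hi_def by simp_all
    then have "c (i-1) < x" "x < c i"
      unfolding x_def divide_lam_iff by simp_all
    then have "x \<in> X i" using mem_X_iff[OF i] by simp
    moreover have "f x = y" using f_on_piece[OF i \<open>x \<in> X i\<close>] lam_pos unfolding x_def by simp
    ultimately show "y \<in> f ` X i" by blast
  qed
  then have "{atom_lo i..atom_hi i} \<subseteq> atom1 i"
    using closure_mono closure_greaterThanLessThan[OF atom_lo_less_hi[OF i]] unfolding atom1_def
    by metis
  ultimately show ?thesis by (rule antisym)
qed

lemma f_in_atom1:
  assumes "i \<in> {1..N}" "x \<in> X i"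
  shows "f x \<in> {atom_lo i..atom_hi i}"
proof -
  have "f x \<in> atom1 i" unfolding atom1_def using assms(2) by (intro subsetD[OF closure_subset] imageI)
  then show ?thesis using atom1_eq[OF assms(1)] by simp
qed

lemma fpiece_eq:
  assumes i: "i \<in> {1..N}" and x: "x \<in> {c (i-1)..c i}"
  shows "fpiece N c f i x = lam * x + offset i"
proof (cases "x \<in> X i")
  case True then show ?thesis unfolding fpiece_def ext_def using f_on_piece[OF i] by simp
next
  case False
  have "x \<in> closure (X i)" using closure_X[OF i] x by simp
  then have "x islimpt X i" using False unfolding closure_def by simp
  have "(f \<longlongrightarrow> lam * x + offset i) (at x within X i)"
  proof (rule Lim_transform_eventually)
    show "((\<lambda>t. lam * t + offset i) \<longlongrightarrow> lam * x + offset i) (at x within X i)"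
      by (intro tendsto_intros)
    show "\<forall>\<^sub>F t in at x within X i. lam * t + offset i = f t"
      using f_on_piece[OF i] by (auto simp: eventually_at_filter)
  qed
  then have "Lim (at x within X i) f = lam * x + offset i"
    by (rule tendsto_Lim[rotated]) (simp add: trivial_limit_within \<open>x islimpt X i\<close>)
  then show ?thesis unfolding fpiece_def ext_def using False by simp
qed

lemma atom1_subset_fpiece_image: "i \<in> {1..N} \<Longrightarrow> atom1 i \<subseteq> fpiece N c f i ` closure (X i)"
proof
  fix y assume i: "i \<in> {1..N}" and "y \<in> atom1 i"
  then have y: "lam * c (i-1) \<le> y - offset i" "y - offset i \<le> lam * c i"
    using atom1_eq[OF i] unfolding atom_lo_def atom_hi_def by auto
  define x where "x = (y - offset i) / lam"
  have x: "x \<in> {c (i-1)..c i}" using y unfolding x_def by (simp add: divide_lam_iff)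
  have "fpiece N c f i x = y" using fpiece_eq[OF i x] lam_pos unfolding x_def by simp
  then show "y \<in> fpiece N c f i ` closure (X i)" using x closure_X[OF i] by force
qed

lemma atom1_disjoint:
  assumes "i \<in> {1..N}" "j \<in> {1..N}" "i \<noteq> j"
  shows "atom1 i \<inter> atom1 j = {}"
proof -
  have "\<forall>i\<in>{1..N}. \<forall>j\<in>{1..N}. i \<noteq> j \<longrightarrow>
      fpiece N c f i ` closure (X i) \<inter> fpiece N c f j ` closure (X j) = {}"
    using separated unfolding P2_def by (elim conjE)
  then have "fpiece N c f i ` closure (X i) \<inter> fpiece N c f j ` closure (X j) = {}"
    using assms by blast
  then show ?thesis
    using atom1_subset_fpiece_image[OF assms(1)] atom1_subset_fpiece_image[OF assms(2)] by blast
qed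

lemma closed_atom1: "closed (atom1 i)"
  unfolding atom1_def by simp

lemma Z_Int_X: "i \<in> {1..N} \<Longrightarrow> Z \<inter> X i = X i"
  using X_subset_Z by blast

lemma atom1_in_atomsf: "i \<in> {1..N} \<Longrightarrow> atom1 i \<in> atomsf N c f 1"
  unfolding atomsf_def atoms_def atom1_def
  using atom1_eq[of i] atom_lo_less_hi[of i] Z_Int_X[of i]
  by (intro CollectI exI[of _ "[i]"]) (auto simp: atom1_def)

lemma atomsf_1_cases:
  assumes "A \<in> atomsf N c f 1"
  obtains i where "i \<in> {1..N}" "A = atom1 i"
proof -
  obtain w where w: "length w = 1" "set w \<subseteq> {1..N}"
    "A = fold (\<lambda>i B. closure (f ` (B \<inter> X i))) w Z"
    using assms unfolding atomsf_def atoms_def by blast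
  then obtain i where "w = [i]" by (cases w) auto
  then show ?thesis using that w Z_Int_X[of i] unfolding atom1_def by simp
qed

text \<open>Pigeonhole: the \<open>N\<close> pairwise disjoint atoms cannot all meet the \<open>N - 1\<close> points of \<open>\<Delta>\<close>.\<close>
lemma atom1_avoiding_Delta: "\<exists>m\<in>{1..N}. atom1 m \<inter> \<Delta> = {}"
proof (rule ccontr)
  assume "\<not> ?thesis"
  then have "\<forall>i\<in>{1..N}. \<exists>p. p \<in> atom1 i \<inter> \<Delta>" by blast
  then obtain h where h: "\<forall>i\<in>{1..N}. h i \<in> atom1 i \<inter> \<Delta>" by metis
  have "inj_on h {1..N}"
    using h atom1_disjoint by (intro inj_onI) (metis IntD1 disjoint_iff)
  moreover have "h ` {1..N} \<subseteq> \<Delta>" using h by blast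
  ultimately have "card {1..N} \<le> card \<Delta>" using card_inj_on_le finite_Delta by blast
  moreover have "card \<Delta> \<le> card {1..N-1}" unfolding Delta_def by (rule card_image_le) simp
  ultimately show False using two_le_N by simp
qed

lemma funpow_in_Z: "x \<in> Z \<Longrightarrow> (f ^^ n) x \<in> Z"
  by (induction n) (use f_into in \<open>auto simp del: atLeastAtMost_iff\<close>)

end

section \<open>Perfect sets and gaps on the line\<close>

lemma uncountable_perfect_closed:
  fixes S :: "'a::{real_normed_vector,heine_borel} set"
  assumes "closed S" "S \<noteq> {}" "\<forall>x\<in>S. x islimpt S"
  shows "uncountable S"
proof
  assume "countable S"
  define G where "G = (\<lambda>x. S - {x}) ` S"
  have "countable G" unfolding G_def using \<open>countable S\<close> by (rule countable_image)
  moreover have "openin (top_of_set S) T \<and> S \<subseteq> closure T" if "T \<in> G" for T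
  proof -
    obtain x where x: "x \<in> S" "T = S - {x}" using \<open>T \<in> G\<close> unfolding G_def by blast
    have "T = S \<inter> - {x}" using x(2) by blast
    then have "openin (top_of_set S) T" using openin_open_Int[of "- {x}" S] by (simp add: open_Compl)
    moreover have "x \<in> closure T"
      using assms(3) x by (simp add: islimpt_in_closure)
    then have "S \<subseteq> closure T" using x(2) closure_subset[of T] by blast
    ultimately show ?thesis by (rule conjI)
  qed
  ultimately have "S \<subseteq> closure (\<Inter>G)" by (rule Baire[OF assms(1)])
  moreover have "\<Inter>G = {}"
  proof (rule ccontr)
    assume "\<Inter>G \<noteq> {}"
    then obtain z where z: "z \<in> \<Inter>G" by blast
    obtain x0 where "x0 \<in> S" using assms(2) by blast
    then have "S - {x0} \<in> G" unfolding G_def by (rule imageI)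
    then have "z \<in> S" using z by blast
    then have "S - {z} \<in> G" unfolding G_def by (rule imageI)
    then show False using z by blast
  qed
  ultimately show False using assms(2) by simp
qed

lemma frontier_bounded_interval:
  fixes G :: "real set"
  assumes "open G" "connected G" "bounded G" "G \<noteq> {}" "x \<in> frontier G"
  shows "x = Inf G \<or> x = Sup G"
proof -
  have bdd: "bdd_above G" "bdd_below G"
    using assms(3) by (auto intro: bounded_imp_bdd_above bounded_imp_bdd_below)
  have "G \<subseteq> {Inf G..Sup G}" using cInf_lower cSup_upper bdd by fastforce
  then have "closure G \<subseteq> {Inf G..Sup G}" by (rule closure_minimal) simp
  moreover have "x \<in> closure G" "x \<notin> G"
    using assms(5) interior_open[OF assms(1)] unfolding frontier_def by simp_all
  ultimately have x: "Inf G \<le> x" "x \<le> Sup G" by auto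
  show ?thesis
  proof (rule ccontr)
    assume "\<not> ?thesis"
    then have "Inf G < x" "x < Sup G" using x by (simp_all add: order_le_less)
    then obtain a b where "a \<in> G" "a < x" "b \<in> G" "x < b"
      using cInf_lessD[OF assms(4)] less_cSupD[OF assms(4)] by metis
    moreover have "is_interval G" using assms(2) by (simp add: is_interval_connected_1)
    ultimately have "x \<in> G" unfolding is_interval_1 by (metis less_imp_le)
    then show False using \<open>x \<notin> G\<close> by simp
  qed
qed

lemma countable_gap_endpoints:
  fixes K :: "real set"
  assumes "closed K"
  shows "countable (gap_endpoints K)"
proof -
  have open_comp: "open C" if "C \<in> components (- K)" for C
    using open_components[OF _ that] assms by (simp add: open_Compl)
  have "pairwise disjnt (components (- K))"
    unfolding pairwise_def disjnt_def using components_nonoverlap by metis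
  then have "countable (components (- K))"
    using countable_disjoint_open_subsets open_comp by blast
  moreover have "gap_endpoints K \<subseteq> (\<Union>C\<in>components (- K). {Inf C, Sup C})"
  proof
    fix x assume "x \<in> gap_endpoints K"
    then obtain C where C: "C \<in> components (- K)" "bounded C" "x \<in> frontier C"
      unfolding gap_endpoints_def by blast
    then have "x = Inf C \<or> x = Sup C"
      using frontier_bounded_interval open_comp in_components_connected in_components_nonempty
      by blast
    then show "x \<in> (\<Union>C\<in>components (- K). {Inf C, Sup C})" using C(1) by blast
  qed
  moreover have "countable (\<Union>C\<in>components (- K). {Inf C, Sup C})"
    using \<open>countable (components (- K))\<close> by (intro countable_UN) auto
  ultimately show ?thesis by (meson countable_subset)
qed

section \<open>Atoms, the attractor and exceptional points\<close>

context piecewise_contraction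
begin

abbreviation atom_step :: "nat \<Rightarrow> real set \<Rightarrow> real set" where
  "atom_step \<equiv> (\<lambda>i B. closure (f ` (B \<inter> X i)))"

lemma atom_step_mono: "A \<subseteq> B \<Longrightarrow> atom_step i A \<subseteq> atom_step i B"
  by (intro closure_mono image_mono) blast

lemma fold_atom_step_mono: "A \<subseteq> B \<Longrightarrow> fold atom_step w A \<subseteq> fold atom_step w B"
  by (induction w arbitrary: A B) (auto dest: atom_step_mono)

lemma atom_step_subset_Z: "B \<subseteq> Z \<Longrightarrow> atom_step i B \<subseteq> Z"
  using f_into by (intro closure_minimal) auto

lemma fold_atom_step_subset_Z: "B \<subseteq> Z \<Longrightarrow> fold atom_step w B \<subseteq> Z"
  by (induction w arbitrary: B) (auto dest: atom_step_subset_Z)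

lemma closed_fold_atom_step: "closed B \<Longrightarrow> closed (fold atom_step w B)"
  by (induction w arbitrary: B) auto

lemma atom_step_Z: "i \<in> {1..N} \<Longrightarrow> atom_step i Z = atom1 i"
  using Z_Int_X unfolding atom1_def by simp

definition atom_union :: "nat \<Rightarrow> real set" where "atom_union n = \<Union>(atomsf N c f n)"

lemma finite_atomsf: "finite (atomsf N c f n)"
proof -
  have "atomsf N c f n \<subseteq> (\<lambda>w. fold atom_step w Z) ` {w. set w \<subseteq> {1..N} \<and> length w = n}"
    unfolding atomsf_def atoms_def by blast
  moreover have "finite {w. set w \<subseteq> {1..N::nat} \<and> length w = n}"
    by (rule finite_lists_length_eq) simp
  ultimately show ?thesis by (meson finite_imageI finite_subset)
qed

lemma closed_atom_union: "closed (atom_union n)"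
  unfolding atom_union_def
  by (intro closed_Union finite_atomsf) (auto simp: atomsf_def atoms_def closed_fold_atom_step)

lemma atom_union_Suc_subset: "atom_union (Suc n) \<subseteq> atom_union n"
proof
  fix x assume "x \<in> atom_union (Suc n)"
  then obtain A w where A: "x \<in> A" "length w = Suc n" "set w \<subseteq> {1..N}" "A = fold atom_step w Z"
    unfolding atom_union_def atomsf_def atoms_def by blast
  then obtain i w' where w: "w = i # w'" by (cases w) auto
  have "A \<subseteq> fold atom_step w' Z"
    using A(4) w fold_atom_step_mono[OF atom_step_subset_Z[of Z i]] by simp
  moreover have "fold atom_step w' Z \<in> atomsf N c f n"
    unfolding atomsf_def atoms_def using A w \<open>A \<subseteq> _\<close> by auto
  ultimately show "x \<in> atom_union n" unfolding atom_union_def using A(1) by blast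
qed

lemma atom_union_antimono: "m \<le> n \<Longrightarrow> atom_union n \<subseteq> atom_union m"
  using lift_Suc_antimono_le[of atom_union] atom_union_Suc_subset by blast

lemma attractor_eq: "attractor N c f = (\<Inter>n\<in>{1..}. atom_union n)"
  unfolding attractor_def atom_union_def by simp

lemma attractor_subset_atom1:
  assumes "x \<in> attractor N c f"
  obtains i where "i \<in> {1..N}" "x \<in> atom1 i"
proof -
  have "x \<in> atom_union 1" using assms unfolding attractor_eq by blast
  then obtain A where "A \<in> atomsf N c f 1" "x \<in> A" unfolding atom_union_def by blast
  then show ?thesis using that atomsf_1_cases by metis
qed

lemma attractor_subset_Z: "attractor N c f \<subseteq> Z"
proof
  fix x assume "x \<in> attractor N c f"
  then obtain i where "i \<in> {1..N}" "x \<in> atom1 i" by (rule attractor_subset_atom1)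
  then show "x \<in> Z" using atom_step_Z atom_step_subset_Z[OF order_refl, of i] by auto
qed

definition local_offsets :: "real set" where
  "local_offsets = offset ` {1..N} \<union> (\<lambda>d. f d - lam * d) ` \<Delta>"

lemma f_eq_local_offset:
  assumes "y \<in> Z" obtains e where "e \<in> local_offsets" "f y = lam * y + e"
proof (cases "y \<in> \<Delta>")
  case False
  then obtain i where "i \<in> {1..N}" "y \<in> X i" using piece_containing assms by blast
  then show ?thesis using that f_on_piece unfolding local_offsets_def by blast
next
  case True
  then show ?thesis using that[of "f y - lam * y"] unfolding local_offsets_def by simp
qed

text \<open>\<open>f ^^ n\<close> has slope \<open>lam ^ n\<close> with only finitely many offsets.\<close>
primrec iterate_offsets :: "nat \<Rightarrow> real set" where
  "iterate_offsets 0 = {0}"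
| "iterate_offsets (Suc n) = (\<lambda>(b, e). lam * b + e) ` (iterate_offsets n \<times> local_offsets)"

lemma finite_iterate_offsets: "finite (iterate_offsets n)"
  by (induction n) (simp_all add: local_offsets_def finite_Delta)

lemma funpow_eq_offset:
  assumes "x \<in> Z" obtains b where "b \<in> iterate_offsets n" "(f ^^ n) x = lam ^ n * x + b"
proof (induction n arbitrary: thesis)
  case (Suc n)
  then obtain b where b: "b \<in> iterate_offsets n" "(f ^^ n) x = lam ^ n * x + b" by blast
  obtain e where e: "e \<in> local_offsets" "f ((f ^^ n) x) = lam * (f ^^ n) x + e"
    using f_eq_local_offset funpow_in_Z[OF assms] by blast
  have "(f ^^ Suc n) x = lam ^ Suc n * x + (lam * b + e)"
    using b(2) e(2) by (simp add: algebra_simps)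
  moreover have "lam * b + e \<in> iterate_offsets (Suc n)" using b(1) e(1) by force
  ultimately show ?case using Suc.prems by blast
qed simp

lemma countable_funpow_preimage:
  assumes "countable T"
  shows "countable {x\<in>Z. \<exists>n. (f ^^ n) x \<in> T}"
proof -
  have "{x\<in>Z. \<exists>n. (f ^^ n) x \<in> T} \<subseteq> (\<Union>n. \<Union>b\<in>iterate_offsets n. (\<lambda>p. (p - b) / lam ^ n) ` T)"
  proof
    fix x assume "x \<in> {x\<in>Z. \<exists>n. (f ^^ n) x \<in> T}"
    then obtain n where x: "x \<in> Z" "(f ^^ n) x \<in> T" by blast
    obtain b where b: "b \<in> iterate_offsets n" "(f ^^ n) x = lam ^ n * x + b"
      using funpow_eq_offset[OF x(1)] by blast
    then have "x = ((f ^^ n) x - b) / lam ^ n" using lam_pos by (simp add: field_simps)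
    then show "x \<in> (\<Union>n. \<Union>b\<in>iterate_offsets n. (\<lambda>p. (p - b) / lam ^ n) ` T)"
      using x(2) b(1) by blast
  qed
  moreover have "countable (\<Union>n. \<Union>b\<in>iterate_offsets n. (\<lambda>p. (p - b) / lam ^ n) ` T)"
    using assms finite_iterate_offsets by (simp add: countable_finite)
  ultimately show ?thesis by (rule countable_subset)
qed

lemma countable_eventually_periodic: "countable {x\<in>Z. \<exists>m n. m < n \<and> (f ^^ m) x = (f ^^ n) x}"
proof -
  let ?sol = "\<lambda>m n b b'. (b' - b) / (lam ^ m - lam ^ n)"
  have "{x\<in>Z. \<exists>m n. m < n \<and> (f ^^ m) x = (f ^^ n) x} \<subseteq>
        (\<Union>m. \<Union>n. \<Union>b\<in>iterate_offsets m. \<Union>b'\<in>iterate_offsets n. {?sol m n b b'})"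
  proof
    fix x assume "x \<in> {x\<in>Z. \<exists>m n. m < n \<and> (f ^^ m) x = (f ^^ n) x}"
    then obtain m n where x: "x \<in> Z" "m < n" "(f ^^ m) x = (f ^^ n) x" by blast
    obtain b where b: "b \<in> iterate_offsets m" "(f ^^ m) x = lam ^ m * x + b"
      using funpow_eq_offset[OF x(1)] by blast
    obtain b' where b': "b' \<in> iterate_offsets n" "(f ^^ n) x = lam ^ n * x + b'"
      using funpow_eq_offset[OF x(1)] by blast
    have "lam ^ n < lam ^ m" using x(2) lam_pos lam_less_1 by (intro power_strict_decreasing) auto
    then have "x = ?sol m n b b'" using b(2) b'(2) x(3) by (simp add: field_simps)
    then show "x \<in> (\<Union>m. \<Union>n. \<Union>b\<in>iterate_offsets m. \<Union>b'\<in>iterate_offsets n. {?sol m n b b'})"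
      using b(1) b'(1) by blast
  qed
  moreover have "countable (\<Union>m. \<Union>n. \<Union>b\<in>iterate_offsets m. \<Union>b'\<in>iterate_offsets n. {?sol m n b b'})"
    using finite_iterate_offsets by (simp add: countable_finite)
  ultimately show ?thesis by (rule countable_subset)
qed

end

section \<open>Choice of the orbit\<close>

lemma well_cutting_start:
  assumes "well_cutting N c f xi0"
  shows "xi0 \<in> Xtilde N c f" "xi0 \<noteq> c 0" "xi0 \<noteq> c N"
proof -
  have "xi0 \<in> orbit f xi0" "c 0 \<in> orbit f (c 0)" "c N \<in> orbit f (c N)"
    unfolding orbit_def by (auto intro: range_eqI[of _ _ 0])
  then show "xi0 \<in> Xtilde N c f" "xi0 \<noteq> c 0" "xi0 \<noteq> c N"
    using assms unfolding well_cutting_def by blast+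
qed

locale cantor_contraction = piecewise_contraction +
  assumes cantor: "P3 N c f" and critical_values_regular: "P4 N c f" and two_sided: "P6 N c f"
begin

abbreviation \<Lambda> where "\<Lambda> \<equiv> attractor N c f"

lemma compact_attractor: "compact \<Lambda>" and perfect_attractor: "\<forall>x\<in>\<Lambda>. x islimpt \<Lambda>"
  using cantor unfolding P3_def cantor_set_def by blast+

text \<open>P4 supplies a point of \<open>Xtilde N c f\<close>, at which P6 applies.\<close>
lemma atom_meets_adjacent_pieces:
  assumes i: "i \<in> {1..N-1}" and n: "1 \<le> n"
  obtains A where "A \<in> atomsf N c f n" "A \<inter> X i \<noteq> {}" "A \<inter> X (i + 1) \<noteq> {}"
proof -
  define x0 where "x0 = fpiece N c f 1 (c 1)"
  have "(1::nat) \<in> {1..N-1}" using two_le_N by simp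
  then have x0: "x0 \<in> Xtilde N c f"
    using critical_values_regular unfolding P4_def x0_def by blast
  have "\<forall>x\<in>Xtilde N c f. \<forall>i\<in>{1..N - 1}. c i \<in> Delta_lr N c f x"
    using two_sided unfolding P6_def .
  then have "c i \<in> Delta_lr N c f x0" using x0 i by blast
  then obtain i' where i': "c i = c i'" "i' \<in> {1..N-1}" and lr:
    "\<forall>n\<ge>1. \<exists>A\<in>atoms_of_pt N c f n x0. c i' \<in> A \<and>
        (\<exists>t. (f ^^ (t + n)) x0 \<in> A \<inter> X i') \<and> (\<exists>t'. (f ^^ (t' + n)) x0 \<in> A \<inter> X (i' + 1))"
    unfolding Delta_lr_def by blast
  have "i' = i" using c_inj[of i i'] i' i by (metis atLeastAtMost_iff diff_le_self le_trans)
  then obtain A where "A \<in> atoms_of_pt N c f n x0"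
      "\<exists>t. (f ^^ (t + n)) x0 \<in> A \<inter> X i" "\<exists>t'. (f ^^ (t' + n)) x0 \<in> A \<inter> X (i + 1)"
    using lr n by blast
  then show ?thesis using that unfolding atoms_of_pt_def by blast
qed

lemma atom_step_in_atomsf:
  assumes "A \<in> atomsf N c f n" "i \<in> {1..N}" "atom_step i A \<noteq> {}"
  shows "atom_step i A \<in> atomsf N c f (Suc n)"
proof -
  obtain w where w: "length w = n" "set w \<subseteq> {1..N}" "A = fold atom_step w Z"
    using assms(1) unfolding atomsf_def atoms_def by blast
  then show ?thesis
    unfolding atomsf_def atoms_def using assms(2,3) by (intro CollectI exI[of _ "w @ [i]"]) auto
qed

lemma atomsf_subset_Z: "A \<in> atomsf N c f n \<Longrightarrow> A \<subseteq> Z"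
  unfolding atomsf_def atoms_def using fold_atom_step_subset_Z[of Z] by blast

lemma atom1_meets_atom_union:
  assumes m: "m \<in> {1..N}" and n: "1 \<le> n"
  shows "atom1 m \<inter> atom_union (Suc n) \<noteq> {}"
proof -
  define i where "i = (if m < N then m else N - 1)"
  have i: "i \<in> {1..N-1}" "m = i \<or> m = i + 1" using m two_le_N unfolding i_def by auto
  obtain A where A: "A \<in> atomsf N c f n" "A \<inter> X i \<noteq> {}" "A \<inter> X (i + 1) \<noteq> {}"
    using atom_meets_adjacent_pieces[OF i(1) n] by blast
  then obtain y where y: "y \<in> A" "y \<in> X m" using i(2) by blast
  have "f y \<in> f ` (A \<inter> X m)" using y by blast
  then have fy: "f y \<in> atom_step m A" by (rule subsetD[OF closure_subset])
  then have "atom_step m A \<noteq> {}" by (metis empty_iff)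
  then have "atom_step m A \<in> atomsf N c f (Suc n)" by (rule atom_step_in_atomsf[OF A(1) m])
  then have "f y \<in> atom_union (Suc n)" unfolding atom_union_def using fy by (rule UnionI)
  moreover have "atom_step m A \<subseteq> atom1 m"
    using atom_step_mono[OF atomsf_subset_Z[OF A(1)], of m] unfolding atom_step_Z[OF m] .
  ultimately show ?thesis using fy by (meson disjoint_iff subsetD)
qed

lemma attractor_meets_atom1:
  assumes m: "m \<in> {1..N}"
  shows "\<Lambda> \<inter> atom1 m \<noteq> {}"
proof -
  define F where "F = (\<lambda>k. atom1 m \<inter> atom_union (k + 2))"
  have "\<Inter>(range F) \<noteq> {}"
  proof (rule compact_nest)
    show "compact (F k)" for k
      unfolding F_def using atom1_eq[OF m] closed_atom_union by (intro compact_Int_closed) simp_all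
    show "F k \<noteq> {}" for k unfolding F_def using atom1_meets_atom_union[OF m, of "k+1"] by simp
    show "F k' \<subseteq> F k" if "k \<le> k'" for k k'
      unfolding F_def using atom_union_antimono[of "k+2" "k'+2"] that by auto
  qed
  then obtain z where z: "z \<in> \<Inter>(range F)" by blast
  have "z \<in> atom_union n" if "n \<in> {1..}" for n
    using z atom_union_antimono[of n "n+2"] unfolding F_def by auto
  then have "z \<in> \<Lambda>" unfolding attractor_eq by blast
  moreover have "z \<in> atom1 m" using z unfolding F_def by blast
  ultimately show ?thesis by blast
qed

text \<open>The atoms of generation 1 are disjoint and closed, so each of them is relatively open
  in \<open>\<Lambda>\<close> and inherits perfectness.\<close>
lemma uncountable_attractor_Int_atom1:
  assumes m: "m \<in> {1..N}"
  shows "uncountable (\<Lambda> \<inter> atom1 m)"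
proof (rule uncountable_perfect_closed)
  show "closed (\<Lambda> \<inter> atom1 m)"
    using compact_imp_closed[OF compact_attractor] closed_atom1 by (rule closed_Int)
  show "\<Lambda> \<inter> atom1 m \<noteq> {}" by (rule attractor_meets_atom1[OF m])
  show "\<forall>x\<in>\<Lambda> \<inter> atom1 m. x islimpt \<Lambda> \<inter> atom1 m"
  proof
    fix x assume x: "x \<in> \<Lambda> \<inter> atom1 m"
    define C where "C = (\<Union>i\<in>{1..N} - {m}. atom1 i)"
    have "closed C" unfolding C_def using closed_atom1 by (intro closed_UN) simp_all
    have "x \<notin> C"
    proof
      assume "x \<in> C"
      then obtain i where "i \<in> {1..N} - {m}" "x \<in> atom1 i" unfolding C_def by blast
      then show False using atom1_disjoint[of i m] x m by blast
    qed
    show "x islimpt \<Lambda> \<inter> atom1 m"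
      unfolding islimpt_def
    proof (intro allI impI)
      fix T assume T: "x \<in> T" "open T"
      then have "x \<in> T - C" "open (T - C)" using \<open>x \<notin> C\<close> \<open>closed C\<close> by auto
      moreover have "x islimpt \<Lambda>" using perfect_attractor x by blast
      ultimately obtain y where y: "y \<in> \<Lambda>" "y \<in> T - C" "y \<noteq> x"
        unfolding islimpt_def by blast
      obtain i where i: "i \<in> {1..N}" "y \<in> atom1 i" using attractor_subset_atom1[OF y(1)] by blast
      have "i = m"
      proof (rule ccontr)
        assume "i \<noteq> m"
        then have "y \<in> C" unfolding C_def using i by blast
        then show False using y by blast
      qed
      then have "y \<in> atom1 m" using i by simp
      then show "\<exists>y\<in>\<Lambda> \<inter> atom1 m. y \<in> T \<and> y \<noteq> x" using y by blast
    qed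
  qed
qed

text \<open>Only countably many points of \<open>\<Lambda> \<inter> atom1 m\<close> violate a requirement of a well-cutting
  orbit (gap endpoints are countable, and the forbidden orbits and \<open>\<Delta>\<close> have countable
  preimages), or have an eventually periodic orbit.\<close>
lemma well_cutting_point_exists:
  assumes m: "m \<in> {1..N}"
  obtains xi0 where "well_cutting N c f xi0" "xi0 \<in> atom1 m"
    "\<And>a b. (f ^^ a) xi0 = (f ^^ b) xi0 \<Longrightarrow> a = b"
proof -
  define T where "T = gap_endpoints \<Lambda> \<union> orbit f (c 0) \<union> orbit f (c N) \<union>
     (\<Union>i\<in>{1..N-1}. orbit f (fpiece N c f i (c i)) \<union> orbit f (fpiece N c f (i+1) (c i))) \<union> \<Delta>"
  have "countable T" unfolding T_def orbit_def Delta_def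
    using countable_gap_endpoints[OF compact_imp_closed[OF compact_attractor]] by simp
  define B where "B = {x\<in>Z. \<exists>n. (f ^^ n) x \<in> T} \<union> {x\<in>Z. \<exists>m n. m < n \<and> (f ^^ m) x = (f ^^ n) x}"
  have "countable B"
    unfolding B_def using countable_funpow_preimage[OF \<open>countable T\<close>] countable_eventually_periodic
    by simp
  with uncountable_attractor_Int_atom1[OF m] have "uncountable ((\<Lambda> \<inter> atom1 m) - B)"
    by (rule uncountable_minus_countable)
  then obtain xi0 where xi0: "xi0 \<in> \<Lambda>" "xi0 \<in> atom1 m" "xi0 \<notin> B"
    by (metis Diff_iff IntE countable_empty equals0I)
  have "xi0 \<in> Z" using xi0(1) attractor_subset_Z by blast
  then have orbit_avoids: "(f ^^ n) xi0 \<notin> T" for n using xi0(3) unfolding B_def by blast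
  have inj: "a = b" if "(f ^^ a) xi0 = (f ^^ b) xi0" for a b
  proof (rule ccontr)
    assume "a \<noteq> b"
    then have "a < b \<or> b < a" by arith
    then have "\<exists>m n. m < n \<and> (f ^^ m) xi0 = (f ^^ n) xi0" using that by metis
    then have "xi0 \<in> B" unfolding B_def using \<open>xi0 \<in> Z\<close> by blast
    then show False using xi0(3) by simp
  qed
  have "xi0 \<in> Xtilde N c f"
    unfolding Xtilde_def using funpow_in_Z[OF \<open>xi0 \<in> Z\<close>] orbit_avoids by (auto simp: T_def)
  moreover have avoid: "orbit f xi0 \<inter> S = {}" if "S \<subseteq> T" for S
    using orbit_avoids that unfolding orbit_def by blast
  ultimately have "well_cutting N c f xi0"
    unfolding well_cutting_def using xi0(1)
    by (intro conjI ballI IntI avoid) (auto simp: T_def)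
  then show ?thesis using that xi0(2) inj by blast
qed

end

section \<open>The map \<open>g\<close>\<close>

locale orbit_cut = piecewise_contraction +
  fixes xi0 :: real and m :: nat
  assumes xi0_Xtilde: "xi0 \<in> Xtilde N c f"
    and xi0_not_endpoint: "xi0 \<noteq> c 0" "xi0 \<noteq> c N"
    and orbit_inj: "\<And>a b. (f ^^ a) xi0 = (f ^^ b) xi0 \<Longrightarrow> a = b"
    and m: "m \<in> {1..N}" and atom1_m_avoids_Delta: "atom1 m \<inter> \<Delta> = {}" and xi0_atom1_m: "xi0 \<in> atom1 m"
    and atom1_sparse: "\<forall>A\<in>atomsf N c f 1. \<forall>x\<in>A \<inter> \<Delta>. \<forall>y\<in>A \<inter> \<Delta>. x = y"
begin

sublocale O: injective_contracted_orbit f lam xi0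
  using lam_pos lam_less_1 orbit_inj by unfold_locales auto

abbreviation \<phi> where "\<phi> \<equiv> phi f lam xi0"
abbreviation d where "d \<equiv> dpts N c f lam xi0"
abbreviation Y where "Y \<equiv> piece d (N + 1)"

lemma orbit_in_Z: "O.xi n \<in> Z" and orbit_notin_Delta: "O.xi n \<notin> \<Delta>"
  using xi0_Xtilde unfolding Xtilde_def O.xi_def by auto

lemma xi0_in_Z: "xi0 \<in> Z" and xi0_notin_Delta: "xi0 \<notin> \<Delta>"
  using orbit_in_Z[of 0] orbit_notin_Delta[of 0] unfolding O.xi_def by simp_all

lemma cut_point_bounds: "p \<in> \<Delta> \<union> {xi0} \<Longrightarrow> c 0 < p \<and> p < c N"
  using Delta_bounds xi0_in_Z xi0_not_endpoint by force

text \<open>The new discontinuity \<open>xi0\<close> lies in the atom \<open>atom1 m\<close>, which contains no point of \<open>\<Delta>\<close>.\<close>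
lemma atom1_cut_points_unique:
  assumes i: "i \<in> {1..N}" and "p \<in> atom1 i \<inter> (\<Delta> \<union> {xi0})" "q \<in> atom1 i \<inter> (\<Delta> \<union> {xi0})"
  shows "p = q"
proof (cases "i = m")
  case False
  then have "xi0 \<notin> atom1 i" using atom1_disjoint[OF i m] xi0_atom1_m by blast
  then show ?thesis using assms atom1_sparse atom1_in_atomsf[OF i] by blast
qed (use assms atom1_m_avoids_Delta in blast)

definition cut_images :: "real set" where "cut_images = \<phi> ` (c ` {0..N} \<union> {xi0})"

lemma card_cut_images: "card cut_images = N + 2"
proof -
  have "inj_on \<phi> (c ` {0..N} \<union> {xi0})" by (rule inj_onI) (rule O.phi_inj)
  then have "card cut_images = card (c ` {0..N} \<union> {xi0})"
    unfolding cut_images_def by (rule card_image)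
  moreover have "xi0 \<notin> c ` {0..N}"
  proof
    assume "xi0 \<in> c ` {0..N}"
    then obtain k where k: "k \<in> {0..N}" "xi0 = c k" by blast
    then have "k \<in> {1..N-1}" using xi0_not_endpoint by (cases "k = 0 \<or> k = N") auto
    then show False using k(2) xi0_notin_Delta unfolding Delta_def by blast
  qed
  moreover have "inj_on c {0..N}" by (rule inj_onI) (use c_inj in auto)
  ultimately show ?thesis by (simp add: card_image)
qed

lemma d_eq_nth: "d j = sorted_list_of_set cut_images ! j"
  unfolding dpts_def cut_images_def by simp

lemma d_strict_mono: "i < j \<Longrightarrow> j < N + 2 \<Longrightarrow> d i < d j"
  using sorted_wrt_nth_less[OF strict_sorted_list_of_set[of cut_images]] card_cut_images
  unfolding d_eq_nth by simp

lemma d_less_imp_less: "i < N + 2 \<Longrightarrow> j < N + 2 \<Longrightarrow> d i < d j \<Longrightarrow> i < j"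
  using d_strict_mono by (metis less_asym nat_neq_iff)

lemma cut_images_enum: "e \<in> cut_images \<Longrightarrow> \<exists>k<N+2. e = d k"
  using card_cut_images unfolding d_eq_nth
  by (metis finite_imageI finite_Un finite_atLeastAtMost finite.emptyI finite_insert
      cut_images_def in_set_conv_nth length_sorted_list_of_set set_sorted_list_of_set)

lemma mem_Y_iff: "j \<in> {1..N+1} \<Longrightarrow> y \<in> Y j \<longleftrightarrow>
   d (j-1) \<le> y \<and> y \<le> d j \<and> (j \<noteq> 1 \<longrightarrow> d (j-1) < y) \<and> (j \<noteq> N + 1 \<longrightarrow> y < d j)"
  using mem_piece_iff[of "N + 1" j y d] two_le_N by simp

lemma no_cut_image_inside_Y:
  assumes j: "j \<in> {1..N+1}" and "y \<in> Y j" "y' \<in> Y j" "y < e" "e < y'" "e \<in> cut_images"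
  shows False
proof -
  obtain k where k: "k < N + 2" "e = d k" using cut_images_enum assms(6) by blast
  have "d (j-1) < d k" "d k < d j" using mem_Y_iff[OF j] assms k by auto
  moreover have "j - 1 < N + 2" "j < N + 2" using j by auto
  ultimately have "j - 1 < k" "k < j"
    using d_less_imp_less[of "j-1" k] d_less_imp_less[of k j] k(1) by simp_all
  then show False by simp
qed

lemma phi_cut_point_notin_Y:
  assumes j: "j \<in> {1..N+1}" and p: "p \<in> \<Delta> \<union> {xi0}"
  shows "\<phi> p \<notin> Y j"
proof
  assume y: "\<phi> p \<in> Y j"
  have "\<phi> p \<in> cut_images" using p unfolding cut_images_def Delta_def by auto
  then obtain k where k: "k < N + 2" "\<phi> p = d k" using cut_images_enum by blast
  have "\<phi> (c 0) \<in> cut_images" unfolding cut_images_def by auto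
  then obtain k0 where k0: "k0 < N + 2" "\<phi> (c 0) = d k0" using cut_images_enum by blast
  have "\<phi> (c N) \<in> cut_images" unfolding cut_images_def by auto
  then obtain kN where kN: "kN < N + 2" "\<phi> (c N) = d kN" using cut_images_enum by blast
  have "d k0 < d k" "d k < d kN"
    using O.phi_strict_mono[of "c 0" p] O.phi_strict_mono[of p "c N"] cut_point_bounds[OF p]
      k(2) k0(2) kN(2) by simp_all
  then have "k0 < k" "k < kN"
    using d_less_imp_less[OF k0(1) k(1)] d_less_imp_less[OF k(1) kN(1)] by simp_all
  then have k_range: "1 \<le> k" "k \<le> N" using kN(1) by linarith+
  have bounds: "d (j-1) \<le> d k" "d k \<le> d j" using mem_Y_iff[OF j] y k(2) by simp_all
  have "j - 1 < N + 2" using j by auto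
  then have "\<not> k < j - 1" using d_strict_mono[of k "j-1"] bounds(1) by fastforce
  moreover have "\<not> j < k" using d_strict_mono[of j k] k(1) bounds(2) by linarith
  ultimately consider "k = j - 1" | "k = j" by linarith
  then show False
  proof cases
    case 1
    then have "j \<noteq> 1" using k_range by simp
    then show False using mem_Y_iff[OF j] y k(2) 1 by simp
  next
    case 2
    then have "j \<noteq> N + 1" using k_range by simp
    then show False using mem_Y_iff[OF j] y k(2) 2 by simp
  qed
qed

abbreviation Zg where "Zg \<equiv> {\<phi> (c 0)..\<phi> (c N)}"

lemma phi_in_phi_hull_iff: "\<phi> p \<in> {\<phi> a..O.phi_right b} \<longleftrightarrow> p \<in> {a..b}"
proof
  assume "\<phi> p \<in> {\<phi> a..O.phi_right b}"
  then have "\<not> \<phi> p < \<phi> a" "\<not> O.phi_right b < \<phi> p" by auto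
  then have "\<not> p < a" "\<not> b < p" using O.phi_strict_mono O.phi_right_less_phi by blast+
  then show "p \<in> {a..b}" by simp
next
  assume "p \<in> {a..b}"
  then show "\<phi> p \<in> {\<phi> a..O.phi_right b}"
    using O.phi_mono[of a p] O.phi_le_phi_right[of p] O.phi_right_mono[of p b] by simp
qed

lemma constructed_map_off_cuts:
  assumes "constructed_map N c f lam xi0 g" "x \<in> Z" "x \<notin> \<Delta> \<union> {xi0}"
  shows "g (\<phi> x) = \<phi> (f x)"
proof -
  have "\<forall>x\<in>Z. \<phi> x \<notin> \<phi> ` (\<Delta> \<union> {xi0}) \<longrightarrow> g (\<phi> x) = \<phi> (f x)"
    using assms(1) unfolding constructed_map_def Let_def by (elim conjE)
  moreover have "\<phi> x \<notin> \<phi> ` (\<Delta> \<union> {xi0})" using assms(3) O.phi_inj by blast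
  ultimately show ?thesis using assms(2) by blast
qed

lemma constructed_map_on_gap:
  assumes "constructed_map N c f lam xi0 g" "1 \<le> r" "\<phi> (O.xi r) < y" "y \<le> \<phi> (O.xi r) + lam ^ r"
  shows "g y = lam * (y - \<phi> (O.xi r)) + \<phi> (O.xi (r + 1))"
proof -
  have "\<forall>r\<ge>1. \<forall>y\<in>{\<phi> (O.xi r)<..\<phi> (O.xi r) + lam ^ r}.
      g y = lam * (y - \<phi> (O.xi r)) + \<phi> (O.xi (r + 1))"
    using assms(1) unfolding constructed_map_def Let_def O.xi_def by (elim conjE)
  then show ?thesis using assms(2-4) by simp
qed

text \<open>Either \<open>y = \<phi> x\<close> and \<open>g y = \<phi> (f x)\<close>, or \<open>y\<close> lies in a gap \<open>G\<^sub>r\<close>, which \<open>g\<close> maps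
  affinely into \<open>G\<^sub>r\<^sub>+\<^sub>1\<close>.\<close>
lemma constructed_map_bounds:
  assumes g: "constructed_map N c f lam xi0 g" and j: "j \<in> {1..N+1}" and y: "y \<in> Zg" "y \<in> Y j"
  obtains x i where "i \<in> {1..N}" "x \<in> X i" "\<phi> x \<le> y" "y \<le> O.phi_right x"
    "g y \<in> {\<phi> (atom_lo i)..O.phi_right (atom_hi i)}"
proof -
  consider (image) x where "x \<in> Z" "y = \<phi> x"
    | (gap) r where "r \<ge> 1" "\<phi> (O.xi r) < y" "y \<le> \<phi> (O.xi r) + lam ^ r"
    using O.phi_image_or_gap[OF c_le[of 0 N], of y] y(1) by auto
  then show ?thesis
  proof cases
    case image
    have "x \<notin> \<Delta> \<union> {xi0}" using phi_cut_point_notin_Y[OF j] y(2) image(2) by blast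
    then obtain i where i: "i \<in> {1..N}" "x \<in> X i" using piece_containing image(1) by blast
    have "g y = \<phi> (f x)" using constructed_map_off_cuts[OF g image(1)] \<open>x \<notin> _\<close> image(2) by simp
    then have "g y \<in> {\<phi> (atom_lo i)..O.phi_right (atom_hi i)}"
      using f_in_atom1[OF i] phi_in_phi_hull_iff by simp
    moreover have "\<phi> x \<le> y" "y \<le> O.phi_right x" using image(2) O.phi_le_phi_right by simp_all
    ultimately show ?thesis using that i by blast
  next
    case gap
    obtain i where i: "i \<in> {1..N}" "O.xi r \<in> X i"
      using piece_containing orbit_in_Z orbit_notin_Delta by blast
    have "O.xi (r + 1) = f (O.xi r)" unfolding O.xi_def by simp
    then have next_in: "atom_lo i \<le> O.xi (r + 1)" "O.xi (r + 1) \<le> atom_hi i"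
      using f_in_atom1[OF i] by simp_all
    have "0 < lam * (y - \<phi> (O.xi r))" "lam * (y - \<phi> (O.xi r)) \<le> lam ^ (r + 1)"
      using gap lam_pos by simp_all
    then have "\<phi> (O.xi (r + 1)) < g y" "g y \<le> \<phi> (O.xi (r + 1)) + lam ^ (r + 1)"
      using constructed_map_on_gap[OF g gap] by simp_all
    then have "g y \<in> {\<phi> (atom_lo i)..O.phi_right (atom_hi i)}"
      using O.phi_mono[OF next_in(1)] O.phi_gap_le_phi_right[of "r + 1"]
        O.phi_right_mono[OF next_in(2)] by simp
    moreover have "\<phi> (O.xi r) \<le> y" "y \<le> O.phi_right (O.xi r)"
      using gap O.phi_gap_le_phi_right[of r] by simp_all
    ultimately show ?thesis using that i by blast
  qed
qed

text \<open>Two points of \<open>Y j\<close> lying over different pieces \<open>X i < X i'\<close> would be separated by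
  \<open>\<phi> (c i)\<close>, a point \<open>d k\<close>.\<close>
lemma Y_over_one_piece:
  assumes j: "j \<in> {1..N+1}" and y: "y \<in> Y j" "y' \<in> Y j"
    and i: "i \<in> {1..N}" "x \<in> X i" "\<phi> x \<le> y" "y \<le> O.phi_right x"
    and i': "i' \<in> {1..N}" "x' \<in> X i'" "\<phi> x' \<le> y'" "y' \<le> O.phi_right x'"
  shows "i = i'"
proof -
  have separated: False
    if k: "k \<in> {1..N}" "k' \<in> {1..N}" "k < k'" "z \<in> X k" "z' \<in> X k'"
      and u: "u \<in> Y j" "u' \<in> Y j" "u \<le> O.phi_right z" "\<phi> z' \<le> u'" for k k' z z' u u'
  proof -
    have "z < c k" "c k < z'" "c k \<in> \<Delta>" using piece_order[OF k] by blast+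
    have "u < \<phi> (c k)" using O.phi_right_less_phi[OF \<open>z < c k\<close>] u(3) by simp
    moreover have "\<phi> (c k) < u'" using O.phi_strict_mono[OF \<open>c k < z'\<close>] u(4) by simp
    moreover have "\<phi> (c k) \<in> cut_images"
      using \<open>c k \<in> \<Delta>\<close> unfolding cut_images_def Delta_def by auto
    ultimately show False using no_cut_image_inside_Y[OF j u(1,2)] by blast
  qed
  show ?thesis
  proof (rule linorder_cases[of i i'])
    assume "i < i'"
    then show ?thesis using separated[OF i(1) i'(1) _ i(2) i'(2) y(1) y(2) i(4) i'(3)] by blast
  next
    assume "i' < i"
    then show ?thesis using separated[OF i'(1) i(1) _ i'(2) i(2) y(2) y(1) i'(4) i(3)] by blast
  qed
qed

lemma atom_g_1_in_phi_hull:
  assumes g: "constructed_map N c f lam xi0 g" and A: "A \<in> atoms_g N c f lam xi0 g 1"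
  obtains i where "i \<in> {1..N}" "A \<subseteq> {\<phi> (atom_lo i)..O.phi_right (atom_hi i)}"
proof -
  obtain w where w: "length w = 1" "set w \<subseteq> {1..N+1}"
    "A = fold (\<lambda>i B. closure (g ` (B \<inter> Y i))) w Zg" "A \<noteq> {}"
    using A unfolding atoms_g_def atoms_def by blast
  then obtain j where "w = [j]" by (cases w) auto
  then have j: "j \<in> {1..N+1}" and A_eq: "A = closure (g ` (Zg \<inter> Y j))" using w by simp_all
  have "Zg \<inter> Y j \<noteq> {}" using w(4) A_eq by auto
  then obtain y0 where y0: "y0 \<in> Zg" "y0 \<in> Y j" by blast
  obtain x0 i0 where x0: "i0 \<in> {1..N}" "x0 \<in> X i0" "\<phi> x0 \<le> y0" "y0 \<le> O.phi_right x0"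
    using constructed_map_bounds[OF g j y0] by metis
  have "g y \<in> {\<phi> (atom_lo i0)..O.phi_right (atom_hi i0)}" if y: "y \<in> Zg \<inter> Y j" for y
  proof -
    obtain x i where xi: "i \<in> {1..N}" "x \<in> X i" "\<phi> x \<le> y" "y \<le> O.phi_right x"
      "g y \<in> {\<phi> (atom_lo i)..O.phi_right (atom_hi i)}"
      using constructed_map_bounds[OF g j] y by blast
    have "i = i0" using Y_over_one_piece[OF j _ y0(2) xi(1-4) x0] y by blast
    then show ?thesis using xi by simp
  qed
  then have "g ` (Zg \<inter> Y j) \<subseteq> {\<phi> (atom_lo i0)..O.phi_right (atom_hi i0)}" by blast
  then have "A \<subseteq> {\<phi> (atom_lo i0)..O.phi_right (atom_hi i0)}"
    unfolding A_eq by (rule closure_minimal) simp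
  then show ?thesis using that x0(1) by blast
qed

lemma atoms_g_1_sparse:
  assumes g: "constructed_map N c f lam xi0 g" and A: "A \<in> atoms_g N c f lam xi0 g 1"
    and u: "u \<in> A \<inter> Delta_g N c f lam xi0" and v: "v \<in> A \<inter> Delta_g N c f lam xi0"
  shows "u = v"
proof -
  obtain i where i: "i \<in> {1..N}" "A \<subseteq> {\<phi> (atom_lo i)..O.phi_right (atom_hi i)}"
    using atom_g_1_in_phi_hull[OF g A] by blast
  have preimage: "\<exists>p. p \<in> atom1 i \<inter> (\<Delta> \<union> {xi0}) \<and> z = \<phi> p"
    if z: "z \<in> A \<inter> Delta_g N c f lam xi0" for z
  proof -
    obtain p where p: "p \<in> \<Delta> \<union> {xi0}" "z = \<phi> p" using z unfolding Delta_g_def by blast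
    then have "\<phi> p \<in> {\<phi> (atom_lo i)..O.phi_right (atom_hi i)}" using z i(2) by blast
    then have "p \<in> atom1 i" using phi_in_phi_hull_iff atom1_eq[OF i(1)] by simp
    then show ?thesis using p by blast
  qed
  obtain p where p: "p \<in> atom1 i \<inter> (\<Delta> \<union> {xi0})" "u = \<phi> p" using preimage[OF u] by blast
  obtain q where q: "q \<in> atom1 i \<inter> (\<Delta> \<union> {xi0})" "v = \<phi> q" using preimage[OF v] by blast
  show ?thesis using atom1_cut_points_unique[OF i(1) p(1) q(1)] p(2) q(2) by simp
qed

end

theorem lemma9:
  fixes N :: nat and c :: "nat \<Rightarrow> real" and f :: "real \<Rightarrow> real" and lam :: real
  assumes "N \<ge> 2"
    and "strict_mono_on {0..N} c"
    and "f ` {c 0..c N} \<subseteq> {c 0..c N}"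
    and "P1 N c f lam" and "P2 N c f" and "P3 N c f" and "P4 N c f" and "P5 N c f" and "P6 N c f"
    and "\<forall>A\<in>atomsf N c f 1. \<forall>x\<in>A \<inter> Delta N c. \<forall>y\<in>A \<inter> Delta N c. x = y"
  shows "\<exists>xi0. well_cutting N c f xi0 \<and>
     (\<forall>g. constructed_map N c f lam xi0 g \<longrightarrow>
        (\<forall>A\<in>atoms_g N c f lam xi0 g 1.
           \<forall>x\<in>A \<inter> Delta_g N c f lam xi0. \<forall>y\<in>A \<inter> Delta_g N c f lam xi0. x = y))"
proof -
  interpret cantor_contraction N c f lam
    using assms by unfold_locales
  obtain m where m: "m \<in> {1..N}" "atom1 m \<inter> Delta N c = {}"
    using atom1_avoiding_Delta by blast
  obtain xi0 where xi0: "well_cutting N c f xi0" "xi0 \<in> atom1 m"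
    "\<And>a b. (f ^^ a) xi0 = (f ^^ b) xi0 \<Longrightarrow> a = b"
    using well_cutting_point_exists[OF m(1)] by blast
  interpret orbit_cut N c f lam xi0 m
    using m xi0 well_cutting_start[OF xi0(1)] assms(10) by unfold_locales auto
  show ?thesis using xi0(1) atoms_g_1_sparse by blast
qed

end
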